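(* Let $h$ be a line tree whose nodes each test a dimension distinct from their ancestors, with set of tested dimensions $d_h$, and let $x$ satisfy $h(x)=l_h$. Then for any $x'$ such that, for all $a\in d_h$, $x'_a\le x_a$ if $f_h(a)=\mathrm{prefix}$ and $x_a\le x'_a$ if $f_h(a)=\mathrm{suffix}$, we have $h(x')=l_h$.
   Context: A line tree is a decision tree (each internal node compares one coordinate with a threshold, each leaf carries a label in $\{0,1\}$) in which every internal node has at least one leaf child, and all leaves except the deepest carry the same label while the deepest leaf carries the opposite label; $l_h$ denotes the label of the deepest leaf. $d_h$ is the set of dimensions tested by nodes of $h$. For $a\in d_h$, $f_h(a)=\mathrm{prefix}$ if at the node testing $a$ the samples with $x_a$ below the threshold are directed toward the leaf labeled $l_h$, and $f_h(a)=\mathrm{suffix}$ if the samples with $x_a$ above the threshold are directed toward that leaf. *)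

theory Defs
  imports Main "HOL.Real"
begin

datatype dtree = Leaf bool | Node nat real dtree dtree

fun eval_tree :: "dtree \<Rightarrow> (nat \<Rightarrow> real) \<Rightarrow> bool" where
  "eval_tree (Leaf b) x = b"
| "eval_tree (Node a t L R) x = (if x a \<le> t then eval_tree L x else eval_tree R x)"

fun dims :: "dtree \<Rightarrow> nat set" where
  "dims (Leaf b) = {}"
| "dims (Node a t L R) = insert a (dims L \<union> dims R)"

fun labels :: "dtree \<Rightarrow> bool set" where
  "labels (Leaf b) = {b}"
| "labels (Node a t L R) = labels L \<union> labels R"

fun distinct_tests :: "dtree \<Rightarrow> bool" where
  "distinct_tests (Leaf b) = True"
| "distinct_tests (Node a t L R) =
     (a \<notin> dims L \<and> a \<notin> dims R \<and> distinct_tests L \<and> distinct_tests R)"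

fun is_leaf :: "dtree \<Rightarrow> bool" where
  "is_leaf (Leaf b) = True"
| "is_leaf (Node a t L R) = False"

text \<open>line_chain l h: h has at least one internal node, every internal node has a leaf
  child (so h is a chain), the deepest leaf carries label l and all other leaves carry
  the opposite label. At the bottom node both children are leaves (both deepest);
  exactly one of them carries l and is taken as "the deepest leaf".\<close>
fun line_chain :: "bool \<Rightarrow> dtree \<Rightarrow> bool" where
  "line_chain l (Leaf b) = False"
| "line_chain l (Node a t L R) =
     (if is_leaf L \<and> is_leaf R then labels L \<union> labels R = {True, False}
      else if is_leaf L then labels L = {\<not> l} \<and> line_chain l R
      else if is_leaf R then labels R = {\<not> l} \<and> line_chain l L
      else False)"

text \<open>line_tree l h: h is a line tree and l = l_h is the label of its deepest leaf.
  (A single leaf is the degenerate line tree whose only leaf is the deepest one.)\<close>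
definition line_tree :: "bool \<Rightarrow> dtree \<Rightarrow> bool" where
  "line_tree l h = (case h of Leaf b \<Rightarrow> b = l | Node a t L R \<Rightarrow> line_chain l h)"

datatype direction = Prefix | Suffix

text \<open>f_h(a): at the node testing a, Prefix if the below-threshold child leads to the
  leaf labeled l_h (the unique leaf with that label), otherwise Suffix.\<close>
fun fdir :: "bool \<Rightarrow> dtree \<Rightarrow> nat \<Rightarrow> direction option" where
  "fdir l (Leaf b) c = None"
| "fdir l (Node a t L R) c =
     (if c = a then Some (if l \<in> labels L then Prefix else Suffix)
      else (case fdir l L c of Some d \<Rightarrow> Some d | None \<Rightarrow> fdir l R c))"

end

theory Submission
  imports Defs
begin

text \<open>The point x' follows the same root-to-leaf path as x. At every node on that path
  exactly one child contains the label l, and x, being classified l, is routed towards it;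
  x' differs from x at the tested coordinate only in the direction recorded by fdir, so it
  crosses the threshold on the same side. Because every subtree off the path is a leaf,
  the two children test disjoint coordinates and the constraints restrict to the child.\<close>

definition shifted_toward :: "bool \<Rightarrow> dtree \<Rightarrow> (nat \<Rightarrow> real) \<Rightarrow> (nat \<Rightarrow> real) \<Rightarrow> bool" where
  "shifted_toward l h x x' \<longleftrightarrow>
     (\<forall>a\<in>dims h. (fdir l h a = Some Prefix \<longrightarrow> x' a \<le> x a)
               \<and> (fdir l h a = Some Suffix \<longrightarrow> x a \<le> x' a))"

lemma eval_tree_in_labels: "eval_tree h x \<in> labels h"
  by (induction h) auto

lemma fdir_eq_None_iff: "fdir l h c = None \<longleftrightarrow> c \<notin> dims h"
  by (induction h) (auto split: option.split)

lemma shifted_toward_Node_root: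
  assumes "shifted_toward l (Node a t L R) x x'"
  shows "(l \<in> labels L \<longrightarrow> x' a \<le> x a) \<and> (l \<notin> labels L \<longrightarrow> x a \<le> x' a)"
  using assms by (auto simp: shifted_toward_def)

lemma shifted_toward_Node_children:
  assumes "distinct_tests (Node a t L R)" and "dims L \<inter> dims R = {}"
    and "shifted_toward l (Node a t L R) x x'"
  shows "shifted_toward l L x x'" and "shifted_toward l R x x'"
proof -
  have "fdir l (Node a t L R) c = fdir l L c" if "c \<in> dims L" for c
    using that assms(1) fdir_eq_None_iff[of l L c] by (auto split: option.split)
  then show "shifted_toward l L x x'"
    using assms(3) by (auto simp: shifted_toward_def)
  have "fdir l (Node a t L R) c = fdir l R c" if "c \<in> dims R" for c
    using that assms(1,2) fdir_eq_None_iff[of l L c] by auto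
  then show "shifted_toward l R x x'"
    using assms(3) by (auto simp: shifted_toward_def)
qed

lemma line_chain_label: "line_chain l h \<Longrightarrow> l \<in> labels h"
  by (induction h) (auto split: if_splits elim: is_leaf.elims)

lemma line_tree_Node_iff: "line_tree l (Node a t L R) \<longleftrightarrow> line_chain l (Node a t L R)"
  by (simp add: line_tree_def)

lemma line_tree_Node_dims_disjoint:
  "line_tree l (Node a t L R) \<Longrightarrow> dims L \<inter> dims R = {}"
  by (cases L; cases R) (auto simp: line_tree_Node_iff)

lemma line_tree_Node_labels:
  "line_tree l (Node a t L R) \<Longrightarrow> l \<in> labels L \<longleftrightarrow> l \<notin> labels R"
  by (cases L; cases R) (auto simp: line_tree_Node_iff split: if_splits dest: line_chain_label)

lemma line_tree_Node_children:
  assumes "line_tree l (Node a t L R)"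
  shows "l \<in> labels L \<Longrightarrow> line_tree l L" and "l \<in> labels R \<Longrightarrow> line_tree l R"
  using assms by (cases L; cases R; auto simp: line_tree_Node_iff line_tree_def split: if_splits)+

lemma line_tree_branch:
  assumes "line_tree l (Node a t L R)" and "eval_tree (Node a t L R) x = l"
  shows "x a \<le> t \<longleftrightarrow> l \<in> labels L"
  using assms eval_tree_in_labels[of L x] eval_tree_in_labels[of R x]
    line_tree_Node_labels[OF assms(1)] by (auto split: if_splits)

lemma line_tree_eval_shifted_toward:
  assumes "line_tree l h" and "distinct_tests h" and "eval_tree h x = l"
    and "shifted_toward l h x x'"
  shows "eval_tree h x' = l"
  using assms
proof (induction h)
  case (Leaf b)
  then show ?case by (simp add: line_tree_def)
next
  case (Node a t L R)
  have x_branch: "x a \<le> t \<longleftrightarrow> l \<in> labels L"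
    using line_tree_branch Node.prems(1,3) .
  then have same_branch: "x' a \<le> t \<longleftrightarrow> x a \<le> t"
    using shifted_toward_Node_root[OF Node.prems(4)] by auto
  have shifted: "shifted_toward l L x x'" "shifted_toward l R x x'"
    using shifted_toward_Node_children Node.prems(2,4)
      line_tree_Node_dims_disjoint[OF Node.prems(1)] by blast+
  show ?case
  proof (cases "x a \<le> t")
    case True
    then have "line_tree l L"
      using x_branch line_tree_Node_children(1)[OF Node.prems(1)] by blast
    then have "eval_tree L x' = l"
      using Node.IH(1) Node.prems(2,3) True shifted(1) by simp
    then show ?thesis using True same_branch by simp
  next
    case False
    then have "line_tree l R"
      using x_branch line_tree_Node_labels[OF Node.prems(1)]
        line_tree_Node_children(2)[OF Node.prems(1)] by blast
    then have "eval_tree R x' = l"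
      using Node.IH(2) Node.prems(2,3) False shifted(2) by simp
    then show ?thesis using False same_branch by simp
  qed
qed

theorem lemma22:
  fixes h :: dtree and l :: bool and x x' :: "nat \<Rightarrow> real"
  assumes "line_tree l h"
    and "distinct_tests h"
    and "eval_tree h x = l"
    and "\<forall>a\<in>dims h. (fdir l h a = Some Prefix \<longrightarrow> x' a \<le> x a)
                    \<and> (fdir l h a = Some Suffix \<longrightarrow> x a \<le> x' a)"
  shows "eval_tree h x' = l"
  using line_tree_eval_shifted_toward assms unfolding shifted_toward_def by blast

end
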